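(* Let $\mathcal A$ be a small abelian category. The map $\mathsf{Cob}^b_0(\mathcal A)\to K_0^+(\mathcal A)$ sending the class of a positive $\mathcal A$-decorated 0-foam with points labelled $X_1,\dots,X_n$ to $[X_1]+\dots+[X_n]$ is a well-defined isomorphism of commutative monoids.
   Context: $K_0^+(\mathcal A)$ is the commutative monoid generated by symbols $[X]$, $X\in\mathrm{Ob}(\mathcal A)$, with relations $[X_2]=[X_1]+[X_3]$ for each short exact sequence $0\to X_1\to X_2\to X_3\to0$ (no inverses adjoined). A positive $\mathcal A$-decorated 0-foam is a finite set of points, each labelled by an object of $\mathcal A$ (and carrying the sign $+$). An $\mathcal A$-decorated 1-foam is a finite oriented graph with trivalent interior vertices. Each vertex is either "in" (two edges in, one out) or "out" (one in, two out); the two edges of equal orientation type are thin and the third is thick. The foam carries a flat connection with fibers in $\mathcal A$. At each vertex the thin edges are ordered (first, second), and a short exact sequence $0\to X_{\mathrm{first}}\to X_{\mathrm{thick}}\to X_{\mathrm{second}}\to0$ of nearby fibers is fixed. A braid-like cobordism from a positive 0-foam $M_0$ to a positive 0-foam $M_1$ is an $\mathcal A$-decorated 1-foam $U$ with boundary $M_0\sqcup M_1$, together with a continuous function $h:U\to[0,1]$ satisfying: - $h^{-1}(0)=M_0$ and $h^{-1}(1)=M_1$; - $h$ is strictly increasing along every edge in the direction of its orientation. In particular there are no local maxima or minima, and every edge is oriented from $M_0$ towards $M_1$. $\mathsf{Cob}^b_0(\mathcal A)$ is the set of positive $\mathcal A$-decorated 0-foams modulo the equivalence relation generated by the existence of a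 braid-like cobordism. It is a commutative monoid under disjoint union. *)

theory Defs
  imports Complex_Main "HOL-Library.Multiset"
begin

record ('o, 'm) cat =
  Dom  :: "'m \<Rightarrow> 'o"
  Cod  :: "'m \<Rightarrow> 'o"
  Comp :: "'m \<Rightarrow> 'm \<Rightarrow> 'm"   \<comment> \<open>Comp C g f = g after f, defined when Cod f = Dom g\<close>
  Idm  :: "'o \<Rightarrow> 'm"

definition hom :: "('o,'m) cat \<Rightarrow> 'o \<Rightarrow> 'o \<Rightarrow> 'm set" where
  "hom C X Y = {f. Dom C f = X \<and> Cod C f = Y}"

definition is_category :: "('o,'m) cat \<Rightarrow> bool" where
  "is_category C \<longleftrightarrow>
     (\<forall>X. Idm C X \<in> hom C X X) \<and>
     (\<forall>f g. Cod C f = Dom C g \<longrightarrow> Comp C g f \<in> hom C (Dom C f) (Cod C g)) \<and>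
     (\<forall>f. Comp C f (Idm C (Dom C f)) = f \<and> Comp C (Idm C (Cod C f)) f = f) \<and>
     (\<forall>f g h. Cod C f = Dom C g \<and> Cod C g = Dom C h \<longrightarrow>
        Comp C h (Comp C g f) = Comp C (Comp C h g) f)"

definition is_zero_object :: "('o,'m) cat \<Rightarrow> 'o \<Rightarrow> bool" where
  "is_zero_object C Z \<longleftrightarrow> (\<forall>X. (\<exists>!f. f \<in> hom C Z X) \<and> (\<exists>!f. f \<in> hom C X Z))"

definition zero_mor :: "('o,'m) cat \<Rightarrow> 'm \<Rightarrow> bool" where
  "zero_mor C f \<longleftrightarrow> (\<exists>Z a b. is_zero_object C Z \<and> a \<in> hom C (Dom C f) Z \<and>
      b \<in> hom C Z (Cod C f) \<and> f = Comp C b a)"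

definition mono :: "('o,'m) cat \<Rightarrow> 'm \<Rightarrow> bool" where
  "mono C f \<longleftrightarrow> (\<forall>g h. Cod C g = Dom C f \<and> Cod C h = Dom C f \<and> Dom C g = Dom C h \<and>
      Comp C f g = Comp C f h \<longrightarrow> g = h)"

definition epi :: "('o,'m) cat \<Rightarrow> 'm \<Rightarrow> bool" where
  "epi C f \<longleftrightarrow> (\<forall>g h. Dom C g = Cod C f \<and> Dom C h = Cod C f \<and> Cod C g = Cod C h \<and>
      Comp C g f = Comp C h f \<longrightarrow> g = h)"

definition iso :: "('o,'m) cat \<Rightarrow> 'm \<Rightarrow> bool" where
  "iso C f \<longleftrightarrow> (\<exists>g. g \<in> hom C (Cod C f) (Dom C f) \<and>
      Comp C g f = Idm C (Dom C f) \<and> Comp C f g = Idm C (Cod C f))"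

definition isomorphic :: "('o,'m) cat \<Rightarrow> 'o \<Rightarrow> 'o \<Rightarrow> bool" where
  "isomorphic C X Y \<longleftrightarrow> (\<exists>f. f \<in> hom C X Y \<and> iso C f)"

definition is_kernel :: "('o,'m) cat \<Rightarrow> 'm \<Rightarrow> 'm \<Rightarrow> bool" where
  "is_kernel C k f \<longleftrightarrow> Cod C k = Dom C f \<and> zero_mor C (Comp C f k) \<and>
     (\<forall>g. Cod C g = Dom C f \<and> zero_mor C (Comp C f g) \<longrightarrow>
        (\<exists>!u. u \<in> hom C (Dom C g) (Dom C k) \<and> Comp C k u = g))"

definition is_cokernel :: "('o,'m) cat \<Rightarrow> 'm \<Rightarrow> 'm \<Rightarrow> bool" where
  "is_cokernel C c f \<longleftrightarrow> Dom C c = Cod C f \<and> zero_mor C (Comp C c f) \<and>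
     (\<forall>g. Dom C g = Cod C f \<and> zero_mor C (Comp C g f) \<longrightarrow>
        (\<exists>!u. u \<in> hom C (Cod C c) (Cod C g) \<and> Comp C u c = g))"

definition is_product :: "('o,'m) cat \<Rightarrow> 'o \<Rightarrow> 'm \<Rightarrow> 'm \<Rightarrow> 'o \<Rightarrow> 'o \<Rightarrow> bool" where
  "is_product C P p1 p2 X Y \<longleftrightarrow> p1 \<in> hom C P X \<and> p2 \<in> hom C P Y \<and>
     (\<forall>Q f g. f \<in> hom C Q X \<and> g \<in> hom C Q Y \<longrightarrow>
        (\<exists>!u. u \<in> hom C Q P \<and> Comp C p1 u = f \<and> Comp C p2 u = g))"

definition is_coproduct :: "('o,'m) cat \<Rightarrow> 'o \<Rightarrow> 'm \<Rightarrow> 'm \<Rightarrow> 'o \<Rightarrow> 'o \<Rightarrow> bool" where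
  "is_coproduct C S i1 i2 X Y \<longleftrightarrow> i1 \<in> hom C X S \<and> i2 \<in> hom C Y S \<and>
     (\<forall>Q f g. f \<in> hom C X Q \<and> g \<in> hom C Y Q \<longrightarrow>
        (\<exists>!u. u \<in> hom C S Q \<and> Comp C u i1 = f \<and> Comp C u i2 = g))"

text \<open>Smallness is automatic: objects and morphisms form the types 'o and 'm.\<close>
definition abelian_category :: "('o,'m) cat \<Rightarrow> bool" where
  "abelian_category C \<longleftrightarrow> is_category C \<and>
     (\<exists>Z. is_zero_object C Z) \<and>
     (\<forall>X Y. \<exists>P p1 p2. is_product C P p1 p2 X Y) \<and>
     (\<forall>X Y. \<exists>S i1 i2. is_coproduct C S i1 i2 X Y) \<and>
     (\<forall>f. \<exists>k. is_kernel C k f) \<and>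
     (\<forall>f. \<exists>c. is_cokernel C c f) \<and>
     (\<forall>f. mono C f \<longrightarrow> (\<exists>g. is_kernel C f g)) \<and>
     (\<forall>f. epi C f \<longrightarrow> (\<exists>g. is_cokernel C f g))"

definition ses :: "('o,'m) cat \<Rightarrow> 'o \<Rightarrow> 'o \<Rightarrow> 'o \<Rightarrow> bool" where
  "ses C X1 X2 X3 \<longleftrightarrow> (\<exists>f g. f \<in> hom C X1 X2 \<and> g \<in> hom C X2 X3 \<and>
      mono C f \<and> epi C g \<and> is_kernel C f g)"

text \<open>Elements of the free commutative monoid on the objects are finite multisets of objects;
  K_0^+ is its quotient by the monoid congruence generated by [X2] = [X1] + [X3].\<close>
inductive K0_eq :: "('o,'m) cat \<Rightarrow> 'o multiset \<Rightarrow> 'o multiset \<Rightarrow> bool" for C where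
  K0_gen: "ses C X1 X2 X3 \<Longrightarrow> K0_eq C (add_mset X2 M) (add_mset X1 (add_mset X3 M))"
| K0_refl: "K0_eq C M M"
| K0_sym: "K0_eq C M N \<Longrightarrow> K0_eq C N M"
| K0_trans: "K0_eq C M N \<Longrightarrow> K0_eq C N P \<Longrightarrow> K0_eq C M P"

text \<open>A positive 0-foam is represented by the multiset of its labels.
  A braid-like cobordism is encoded combinatorially: boundary points P0 (bottom), P1 (top),
  interior vertices V (all naturals), edges E with source/target; each edge carries a fiber
  lab e (the flat connection identifies all fibers along an edge up to isomorphism);
  the height function is recorded on vertices (and interpolated linearly on edges).\<close>
definition braid_cob :: "('o,'m) cat \<Rightarrow> 'o multiset \<Rightarrow> 'o multiset \<Rightarrow> bool" where
  "braid_cob C M0 M1 \<longleftrightarrow>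
    (\<exists>(P0::nat set) P1 V (E::nat set) (lp::nat \<Rightarrow> 'o) (src::nat \<Rightarrow> nat) (tgt::nat \<Rightarrow> nat)
       (lab::nat \<Rightarrow> 'o) (ht::nat \<Rightarrow> real).
       finite P0 \<and> finite P1 \<and> finite V \<and> finite E \<and>
       P0 \<inter> P1 = {} \<and> P0 \<inter> V = {} \<and> P1 \<inter> V = {} \<and>
       image_mset lp (mset_set P0) = M0 \<and> image_mset lp (mset_set P1) = M1 \<and>
       (\<forall>e\<in>E. src e \<in> P0 \<union> P1 \<union> V \<and> tgt e \<in> P0 \<union> P1 \<union> V) \<and>
       \<comment> \<open>boundary points are univalent, with fiber isomorphic to their label\<close>
       (\<forall>p\<in>P0 \<union> P1. \<exists>e\<in>E. {e'\<in>E. src e' = p \<or> tgt e' = p} = {e} \<and>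
            isomorphic C (lp p) (lab e)) \<and>
       \<comment> \<open>interior vertices are trivalent, of type in or out, with a short exact sequence
           0 -> X_first -> X_thick -> X_second -> 0\<close>
       (\<forall>v\<in>V. \<exists>e1 e2 e3. e1 \<in> E \<and> e2 \<in> E \<and> e3 \<in> E \<and> e1 \<noteq> e2 \<and>
            ((({e\<in>E. tgt e = v} = {e1, e2} \<and> {e\<in>E. src e = v} = {e3}) \<or>
              ({e\<in>E. src e = v} = {e1, e2} \<and> {e\<in>E. tgt e = v} = {e3})) \<and>
             ses C (lab e1) (lab e3) (lab e2))) \<and>
       \<comment> \<open>height function\<close>
       (\<forall>p\<in>P0. ht p = 0) \<and> (\<forall>p\<in>P1. ht p = 1) \<and> (\<forall>v\<in>V. 0 < ht v \<and> ht v < 1) \<and>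
       (\<forall>e\<in>E. ht (src e) < ht (tgt e)))"

text \<open>Equivalence relation on positive 0-foams generated by braid-like cobordisms;
  Cob^b_0(A) is the quotient by it.\<close>
definition cob_equiv :: "('o,'m) cat \<Rightarrow> 'o multiset \<Rightarrow> 'o multiset \<Rightarrow> bool" where
  "cob_equiv C = (\<lambda>M N. braid_cob C M N \<or> braid_cob C N M)\<^sup>*\<^sup>*"

end

theory Submission
  imports Defs
begin

text \<open>A braid-like cobordism is swept from bottom to top along its height function. The labels
  of the edges crossing a level form a 0-foam; crossing an interior vertex trades the label of its
  thick edge for those of its two thin edges (or back), which is a defining relation of \<open>K\<^sub>0\<^sup>+\<close>. At the
  boundary the edge labels are isomorphic to the point labels, and isomorphic objects have equal
  classes because \<open>X \<cong> Y\<close> yields exact sequences \<open>0 \<rightarrow> 0 \<rightarrow> X \<rightarrow> Y \<rightarrow> 0\<close> and \<open>0 \<rightarrow> 0 \<rightarrow> Y \<rightarrow> Y \<rightarrow> 0\<close>.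
  Conversely each defining relation \<open>[X\<^sub>2] + M = [X\<^sub>1] + [X\<^sub>3] + M\<close> is realised by a single vertex
  splitting \<open>X\<^sub>2\<close> into \<open>X\<^sub>1\<close> and \<open>X\<^sub>3\<close>, next to vertical strands labelled by \<open>M\<close>.\<close>

lemma K0_eq_add_right: "K0_eq C M N \<Longrightarrow> K0_eq C (M + P) (N + P)"
proof (induction rule: K0_eq.induct)
  case (K0_gen X1 X2 X3 M)
  then show ?case using K0_eq.K0_gen[of C X1 X2 X3 "M + P"] by simp
qed (auto intro: K0_eq.intros)

lemma K0_eq_add: "K0_eq C M N \<Longrightarrow> K0_eq C P Q \<Longrightarrow> K0_eq C (M + P) (N + Q)"
proof -
  assume "K0_eq C M N" "K0_eq C P Q"
  then have "K0_eq C (M + P) (N + P)" "K0_eq C (N + P) (N + Q)"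
    using K0_eq_add_right[of C P Q N] by (simp_all add: K0_eq_add_right add.commute)
  then show ?thesis by (rule K0_eq.K0_trans)
qed

lemma K0_eq_image_mset:
  assumes "\<And>x. x \<in># A \<Longrightarrow> K0_eq C {#f x#} {#g x#}"
  shows "K0_eq C (image_mset f A) (image_mset g A)"
  using assms
proof (induction A)
  case empty
  then show ?case by (simp add: K0_eq.K0_refl)
next
  case (add x A)
  then show ?case using K0_eq_add[of C "{#f x#}" "{#g x#}"] by simp
qed

lemma K0_eq_ses: "ses C X1 X2 X3 \<Longrightarrow> K0_eq C {#X2#} {#X1, X3#}"
  using K0_eq.K0_gen[of C X1 X2 X3 "{#}"] by simp

lemma zero_object_in_unique:
  "is_zero_object C Z \<Longrightarrow> f \<in> hom C X Z \<Longrightarrow> g \<in> hom C X Z \<Longrightarrow> f = g"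
  unfolding is_zero_object_def by (metis (no_types))

lemma zero_object_out_unique:
  "is_zero_object C Z \<Longrightarrow> f \<in> hom C Z X \<Longrightarrow> g \<in> hom C Z X \<Longrightarrow> f = g"
  unfolding is_zero_object_def by (metis (no_types))

lemma zero_object_hom_in:
  assumes "is_zero_object C Z" obtains f where "f \<in> hom C X Z"
  using assms unfolding is_zero_object_def by metis

lemma zero_object_hom_out:
  assumes "is_zero_object C Z" obtains f where "f \<in> hom C Z X"
  using assms unfolding is_zero_object_def by metis

lemma mono_from_zero_object:
  assumes "is_zero_object C Z" and "f \<in> hom C Z X"
  shows "mono C f"
  unfolding mono_def
proof (intro allI impI)
  fix g h
  assume "Cod C g = Dom C f \<and> Cod C h = Dom C f \<and> Dom C g = Dom C h \<and> Comp C f g = Comp C f h"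
  then have "g \<in> hom C (Dom C g) Z" "h \<in> hom C (Dom C g) Z" using assms(2) by (auto simp: hom_def)
  then show "g = h" using zero_object_in_unique[OF assms(1)] by blast
qed

locale category =
  fixes C :: "('o, 'm) cat"
  assumes is_category: "is_category C"
begin

lemma Idm_hom: "Idm C X \<in> hom C X X"
  using is_category unfolding is_category_def by blast

lemma Comp_hom: "f \<in> hom C X Y \<Longrightarrow> g \<in> hom C Y W \<Longrightarrow> Comp C g f \<in> hom C X W"
  using is_category unfolding is_category_def hom_def by auto

lemma Comp_Idm_right [simp]: "Comp C f (Idm C (Dom C f)) = f"
  using is_category unfolding is_category_def by blast

lemma Comp_Idm_left [simp]: "Comp C (Idm C (Cod C f)) f = f"
  using is_category unfolding is_category_def by blast

lemma Comp_assoc: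
  "Cod C f = Dom C g \<Longrightarrow> Cod C g = Dom C h \<Longrightarrow> Comp C h (Comp C g f) = Comp C (Comp C h g) f"
  using is_category unfolding is_category_def by blast

lemma iso_Idm: "iso C (Idm C X)"
  using Idm_hom Comp_Idm_right[of "Idm C X"] unfolding iso_def hom_def by auto

lemma isomorphic_refl: "isomorphic C X X"
  using Idm_hom iso_Idm unfolding isomorphic_def by blast

lemma iso_imp_epi:
  assumes "iso C g"
  shows "epi C g"
  unfolding epi_def
proof (intro allI impI)
  obtain g' where g': "g' \<in> hom C (Cod C g) (Dom C g)" "Comp C g g' = Idm C (Cod C g)"
    using assms unfolding iso_def by blast
  fix a b
  assume ab: "Dom C a = Cod C g \<and> Dom C b = Cod C g \<and> Cod C a = Cod C b \<and> Comp C a g = Comp C b g"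
  have "a = Comp C a (Comp C g g')" using g' ab Comp_Idm_right[of a] by simp
  also have "\<dots> = Comp C (Comp C b g) g'" using Comp_assoc[of g' g a] g' ab by (simp add: hom_def)
  also have "\<dots> = Comp C b (Comp C g g')" using Comp_assoc[of g' g b] g' ab by (simp add: hom_def)
  also have "\<dots> = b" using g' ab Comp_Idm_right[of b] by simp
  finally show "a = b" .
qed

lemma zero_mor_from_zero_object:
  assumes "is_zero_object C Z" and "f \<in> hom C Z Y"
  shows "zero_mor C f"
  unfolding zero_mor_def
proof (intro exI conjI)
  show "Idm C Z \<in> hom C (Dom C f) Z" "f \<in> hom C Z (Cod C f)"
    using assms(2) Idm_hom[of Z] by (simp_all add: hom_def)
  show "f = Comp C f (Idm C Z)" using assms(2) Comp_Idm_right[of f] by (simp add: hom_def)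
qed (rule assms(1))

lemma zero_mor_factors:
  assumes "zero_mor C k" and Z: "is_zero_object C Z"
  obtains u v where "u \<in> hom C (Dom C k) Z" "v \<in> hom C Z (Cod C k)" "k = Comp C v u"
proof -
  obtain Z' a b where Z': "is_zero_object C Z'" and a: "a \<in> hom C (Dom C k) Z'"
    and b: "b \<in> hom C Z' (Cod C k)" and k: "k = Comp C b a"
    using assms(1) unfolding zero_mor_def by blast
  obtain u t where u: "u \<in> hom C (Dom C k) Z" and t: "t \<in> hom C Z Z'"
    using Z zero_object_hom_in zero_object_hom_out by metis
  have "a = Comp C t u"
    using zero_object_in_unique[OF Z' a Comp_hom[OF u t]] .
  then have "k = Comp C (Comp C b t) u"
    using k Comp_assoc[of u t b] u t b by (simp add: hom_def)
  then show thesis using that u Comp_hom[OF t b] by blast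
qed

lemma kernel_from_zero_object:
  assumes Z: "is_zero_object C Z" and f: "f \<in> hom C Z X"
    and g: "g \<in> hom C X Y" and "iso C g"
  shows "is_kernel C f g"
  unfolding is_kernel_def
proof (intro conjI allI impI)
  have f_dom: "Dom C f = Z" "Cod C f = X" and g_dom: "Dom C g = X" "Cod C g = Y"
    using f g by (simp_all add: hom_def)
  then show "Cod C f = Dom C g" by simp
  show "zero_mor C (Comp C g f)" by (rule zero_mor_from_zero_object[OF Z Comp_hom[OF f g]])
  obtain g' where g': "g' \<in> hom C Y X" "Comp C g' g = Idm C X"
    using assms(4) g_dom unfolding iso_def by auto
  fix h
  assume h: "Cod C h = Dom C g \<and> zero_mor C (Comp C g h)"
  then have h_hom: "h \<in> hom C (Dom C h) X" using g_dom by (simp add: hom_def)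
  have gh: "Comp C g h \<in> hom C (Dom C h) Y" using Comp_hom[OF h_hom g] .
  obtain u v where u: "u \<in> hom C (Dom C h) Z" and v: "v \<in> hom C Z Y"
    and uv: "Comp C g h = Comp C v u"
  proof (rule zero_mor_factors[OF conjunct2[OF h] Z])
    fix u v assume "u \<in> hom C (Dom C (Comp C g h)) Z" "v \<in> hom C Z (Cod C (Comp C g h))"
      "Comp C g h = Comp C v u"
    then show thesis using that gh by (simp add: hom_def)
  qed
  have g'v: "Comp C g' v = f"
    using zero_object_out_unique[OF Z Comp_hom[OF v g'(1)] f] .
  have "h = Comp C (Comp C g' g) h"
    using g'(2) h_hom Comp_Idm_left[of h] by (simp add: hom_def)
  also have "\<dots> = Comp C g' (Comp C v u)"
    using Comp_assoc[of h g g'] h g_dom g'(1) uv by (simp add: hom_def)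
  also have "\<dots> = Comp C f u"
    using Comp_assoc[of u v g'] u v g'(1) g'v by (simp add: hom_def)
  finally have hu: "h = Comp C f u" .
  show "\<exists>!u. u \<in> hom C (Dom C h) (Dom C f) \<and> Comp C f u = h"
  proof
    show "u \<in> hom C (Dom C h) (Dom C f) \<and> Comp C f u = h" using u hu f_dom by simp
    fix w assume "w \<in> hom C (Dom C h) (Dom C f) \<and> Comp C f w = h"
    then show "w = u" using zero_object_in_unique[OF Z _ u] f_dom by simp
  qed
qed

lemma ses_zero_iso:
  assumes "is_zero_object C Z" and "g \<in> hom C X Y" and "iso C g"
  shows "ses C Z X Y"
proof -
  obtain f where f: "f \<in> hom C Z X" using zero_object_hom_out[OF assms(1)] .
  show ?thesis
    unfolding ses_def
    by (intro exI[of _ f] exI[of _ g] conjI f assms(2) mono_from_zero_object[OF assms(1) f]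
        iso_imp_epi[OF assms(3)] kernel_from_zero_object[OF assms(1) f assms(2,3)])
qed

lemma isomorphic_imp_K0_eq:
  assumes "is_zero_object C Z" and "isomorphic C X Y"
  shows "K0_eq C {#X#} {#Y#}"
proof -
  obtain g where "g \<in> hom C X Y" "iso C g" using assms(2) unfolding isomorphic_def by blast
  then have "K0_eq C {#X#} {#Z, Y#}" by (intro K0_eq_ses ses_zero_iso[OF assms(1)])
  moreover have "K0_eq C {#Y#} {#Z, Y#}" using K0_eq_ses ses_zero_iso[OF assms(1) Idm_hom iso_Idm] .
  ultimately show ?thesis by (rule K0_eq.K0_trans[OF _ K0_eq.K0_sym])
qed

end

locale braid_cobordism = category C
  for C :: "('o, 'm) cat" +
  fixes P0 P1 V E :: "nat set" and lp :: "nat \<Rightarrow> 'o" and src tgt :: "nat \<Rightarrow> nat"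
    and lab :: "nat \<Rightarrow> 'o" and ht :: "nat \<Rightarrow> real"
  assumes finite_P0: "finite P0" and finite_P1: "finite P1" and finite_V: "finite V"
    and finite_E: "finite E"
    and disjoint: "P0 \<inter> P1 = {}" "P0 \<inter> V = {}" "P1 \<inter> V = {}"
    and edge_ends: "e \<in> E \<Longrightarrow> src e \<in> P0 \<union> P1 \<union> V \<and> tgt e \<in> P0 \<union> P1 \<union> V"
    and boundary_point: "p \<in> P0 \<union> P1 \<Longrightarrow>
      \<exists>e\<in>E. {e'\<in>E. src e' = p \<or> tgt e' = p} = {e} \<and> isomorphic C (lp p) (lab e)"
    and trivalent_vertex: "v \<in> V \<Longrightarrow> \<exists>e1 e2 e3. e1 \<in> E \<and> e2 \<in> E \<and> e3 \<in> E \<and> e1 \<noteq> e2 \<and>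
      ((({e\<in>E. tgt e = v} = {e1, e2} \<and> {e\<in>E. src e = v} = {e3}) \<or>
        ({e\<in>E. src e = v} = {e1, e2} \<and> {e\<in>E. tgt e = v} = {e3})) \<and>
       ses C (lab e1) (lab e3) (lab e2))"
    and ht_P0: "p \<in> P0 \<Longrightarrow> ht p = 0" and ht_P1: "p \<in> P1 \<Longrightarrow> ht p = 1"
    and ht_V: "v \<in> V \<Longrightarrow> 0 < ht v \<and> ht v < 1"
    and ht_edge: "e \<in> E \<Longrightarrow> ht (src e) < ht (tgt e)"

lemma (in category) braid_cob_iff:
  "braid_cob C M0 M1 \<longleftrightarrow> (\<exists>P0 P1 V E lp src tgt lab ht.
     braid_cobordism C P0 P1 V E lp src tgt lab ht \<and>
     image_mset lp (mset_set P0) = M0 \<and> image_mset lp (mset_set P1) = M1)"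
  unfolding braid_cob_def braid_cobordism_def braid_cobordism_axioms_def
  using category_axioms by (simp only: Ball_def conj_ac simp_thms)

context braid_cobordism
begin

lemma src_ne_tgt: "e \<in> E \<Longrightarrow> src e \<noteq> tgt e"
  using ht_edge by fastforce

lemma tgt_notin_P0: "e \<in> E \<Longrightarrow> tgt e \<notin> P0"
  using ht_edge[of e] edge_ends[of e] ht_P0 ht_P1 ht_V by fastforce

lemma src_notin_P1: "e \<in> E \<Longrightarrow> src e \<notin> P1"
  using ht_edge[of e] edge_ends[of e] ht_P0 ht_P1 ht_V by fastforce

text \<open>When \<open>T\<close> is the part of the foam below a regular height \<open>t\<close>, this is the 0-foam \<open>h\<^sup>-\<^sup>1(t)\<close>.\<close>

definition cut_labels :: "nat set \<Rightarrow> 'o multiset" where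
  "cut_labels T = image_mset lab (mset_set {e\<in>E. src e \<in> T \<and> tgt e \<notin> T})"

lemma K0_eq_in_out_labels:
  assumes "v \<in> V"
  shows "K0_eq C (image_mset lab (mset_set {e\<in>E. tgt e = v}))
                 (image_mset lab (mset_set {e\<in>E. src e = v}))"
proof -
  obtain e1 e2 e3 where "e1 \<noteq> e2"
      and split: "({e\<in>E. tgt e = v} = {e1, e2} \<and> {e\<in>E. src e = v} = {e3}) \<or>
                  ({e\<in>E. src e = v} = {e1, e2} \<and> {e\<in>E. tgt e = v} = {e3})"
      and "ses C (lab e1) (lab e3) (lab e2)"
    using trivalent_vertex[OF assms] by blast
  then have thick: "K0_eq C {#lab e3#} {#lab e1, lab e2#}"
    and thin: "image_mset lab (mset_set {e1, e2}) = {#lab e1, lab e2#}"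
    by (simp_all add: K0_eq_ses)
  from split show ?thesis
  proof
    assume "{e\<in>E. tgt e = v} = {e1, e2} \<and> {e\<in>E. src e = v} = {e3}"
    then show ?thesis using K0_eq.K0_sym[OF thick] thin by simp
  next
    assume "{e\<in>E. src e = v} = {e1, e2} \<and> {e\<in>E. tgt e = v} = {e3}"
    then show ?thesis using thick thin by simp
  qed
qed

lemma K0_eq_cut_labels_insert:
  assumes v: "v \<in> V" "v \<notin> T"
    and incoming: "\<And>e. e \<in> E \<Longrightarrow> tgt e = v \<Longrightarrow> src e \<in> T"
    and outgoing: "\<And>e. e \<in> E \<Longrightarrow> src e = v \<Longrightarrow> tgt e \<notin> T"
  shows "K0_eq C (cut_labels T) (cut_labels (insert v T))"
proof -
  define A where "A = {e\<in>E. src e \<in> T \<and> tgt e \<notin> T} - {e\<in>E. tgt e = v}"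
  have finite: "finite A" "finite {e\<in>E. tgt e = v}" "finite {e\<in>E. src e = v}"
    using finite_E by (auto simp: A_def)
  have "{e\<in>E. src e \<in> T \<and> tgt e \<notin> T} = A \<union> {e\<in>E. tgt e = v}"
    and "A \<inter> {e\<in>E. tgt e = v} = {}"
    using incoming v(2) by (auto simp: A_def)
  then have "cut_labels T =
      image_mset lab (mset_set A) + image_mset lab (mset_set {e\<in>E. tgt e = v})"
    unfolding cut_labels_def using finite by (simp add: mset_set_Union)
  moreover have "{e\<in>E. src e \<in> insert v T \<and> tgt e \<notin> insert v T} = A \<union> {e\<in>E. src e = v}"
    and "A \<inter> {e\<in>E. src e = v} = {}"
    using outgoing src_ne_tgt v(2) unfolding A_def by fastforce+
  then have "cut_labels (insert v T) =
      image_mset lab (mset_set A) + image_mset lab (mset_set {e\<in>E. src e = v})"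
    unfolding cut_labels_def using finite by (simp add: mset_set_Union)
  ultimately show ?thesis
    using K0_eq_add[OF K0_eq.K0_refl K0_eq_in_out_labels[OF v(1)]] by simp
qed

lemma K0_eq_cut_labels_sweep:
  assumes "S \<subseteq> V" and "\<And>e. e \<in> E \<Longrightarrow> tgt e \<in> S \<Longrightarrow> src e \<in> P0 \<union> S"
  shows "K0_eq C (cut_labels P0) (cut_labels (P0 \<union> S))"
  using finite_subset[OF assms(1) finite_V] assms
proof (induction S rule: finite_ranking_induct[where f = ht])
  case empty
  show ?case by (simp add: K0_eq.K0_refl)
next
  case (insert v S)
  have v: "v \<in> V" and S: "S \<subseteq> V" using insert.prems(1) by auto
  have below: "src e \<in> P0 \<union> S" if "e \<in> E" "tgt e \<in> S" for e
  proof -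
    have "ht (src e) < ht v" using ht_edge[OF that(1)] insert.hyps(2)[OF that(2)] by simp
    then show ?thesis using insert.prems(2)[OF that(1)] that(2) by auto
  qed
  have IH: "K0_eq C (cut_labels P0) (cut_labels (P0 \<union> S))" by (rule insert.IH[OF S below])
  show ?case
  proof (cases "v \<in> S")
    case True
    then show ?thesis using IH by (simp add: insert_absorb)
  next
    case False
    have "K0_eq C (cut_labels (P0 \<union> S)) (cut_labels (insert v (P0 \<union> S)))"
    proof (rule K0_eq_cut_labels_insert[OF v])
      show "v \<notin> P0 \<union> S" using v False disjoint(2) by auto
      show "src e \<in> P0 \<union> S" if "e \<in> E" "tgt e = v" for e
        using insert.prems(2)[OF that(1)] src_ne_tgt[OF that(1)] that(2) by auto
      show "tgt e \<notin> P0 \<union> S" if "e \<in> E" "src e = v" for e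
      proof -
        have "ht v < ht (tgt e)" using ht_edge[OF that(1)] that(2) by simp
        then show ?thesis using tgt_notin_P0[OF that(1)] insert.hyps(2)[of "tgt e"] by force
      qed
    qed
    then show ?thesis using K0_eq.K0_trans[OF IH] by simp
  qed
qed

definition boundary_edge :: "nat \<Rightarrow> nat" where
  "boundary_edge p =
    (SOME e. e \<in> E \<and> {e'\<in>E. src e' = p \<or> tgt e' = p} = {e} \<and> isomorphic C (lp p) (lab e))"

lemma boundary_edge:
  assumes "p \<in> P0 \<union> P1"
  shows "boundary_edge p \<in> E" "{e\<in>E. src e = p \<or> tgt e = p} = {boundary_edge p}"
    "isomorphic C (lp p) (lab (boundary_edge p))"
proof -
  have "\<exists>e. e \<in> E \<and> {e'\<in>E. src e' = p \<or> tgt e' = p} = {e} \<and> isomorphic C (lp p) (lab e)"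
    using boundary_point[OF assms] by blast
  from someI_ex[OF this, folded boundary_edge_def]
  show "boundary_edge p \<in> E" "{e\<in>E. src e = p \<or> tgt e = p} = {boundary_edge p}"
    "isomorphic C (lp p) (lab (boundary_edge p))" by simp_all
qed

lemma boundary_edge_incident:
  assumes "e \<in> E" and "p \<in> P0 \<union> P1" and "src e = p \<or> tgt e = p"
  shows "boundary_edge p = e"
proof -
  have "e \<in> {e\<in>E. src e = p \<or> tgt e = p}" using assms(1,3) by simp
  then show ?thesis unfolding boundary_edge(2)[OF assms(2)] by simp
qed

lemma bij_betw_boundary_edge_P0: "bij_betw boundary_edge P0 {e\<in>E. src e \<in> P0}"
proof (rule bij_betw_byWitness[where f' = src])
  have "src (boundary_edge p) = p \<and> boundary_edge p \<in> E" if "p \<in> P0" for p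
  proof -
    have "boundary_edge p \<in> {e\<in>E. src e = p \<or> tgt e = p}"
      using boundary_edge(1,2)[of p] that by simp
    then show ?thesis using tgt_notin_P0[of "boundary_edge p"] that by auto
  qed
  then show "\<forall>p\<in>P0. src (boundary_edge p) = p"
    and "boundary_edge ` P0 \<subseteq> {e\<in>E. src e \<in> P0}" by auto
  show "\<forall>e\<in>{e\<in>E. src e \<in> P0}. boundary_edge (src e) = e"
    using boundary_edge_incident by simp
  show "src ` {e\<in>E. src e \<in> P0} \<subseteq> P0" by auto
qed

lemma bij_betw_boundary_edge_P1: "bij_betw boundary_edge P1 {e\<in>E. tgt e \<in> P1}"
proof (rule bij_betw_byWitness[where f' = tgt])
  have "tgt (boundary_edge p) = p \<and> boundary_edge p \<in> E" if "p \<in> P1" for p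
  proof -
    have "boundary_edge p \<in> {e\<in>E. src e = p \<or> tgt e = p}"
      using boundary_edge(1,2)[of p] that by simp
    then show ?thesis using src_notin_P1[of "boundary_edge p"] that by auto
  qed
  then show "\<forall>p\<in>P1. tgt (boundary_edge p) = p"
    and "boundary_edge ` P1 \<subseteq> {e\<in>E. tgt e \<in> P1}" by auto
  show "\<forall>e\<in>{e\<in>E. tgt e \<in> P1}. boundary_edge (tgt e) = e"
    using boundary_edge_incident by simp
  show "tgt ` {e\<in>E. tgt e \<in> P1} \<subseteq> P1" by auto
qed

lemma K0_eq_boundary_edge_labels:
  assumes "is_zero_object C Z" and "P \<subseteq> P0 \<union> P1" and "bij_betw boundary_edge P B"
  shows "K0_eq C (image_mset lp (mset_set P)) (image_mset lab (mset_set B))"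
proof -
  have "image_mset lab (mset_set B) = image_mset (lab \<circ> boundary_edge) (mset_set P)"
    using assms(3) image_mset_mset_set[of boundary_edge P] unfolding bij_betw_def
    by (simp add: multiset.map_comp[symmetric])
  moreover have "K0_eq C (image_mset lp (mset_set P)) (image_mset (lab \<circ> boundary_edge) (mset_set P))"
  proof (rule K0_eq_image_mset)
    have "finite P" using assms(2) finite_P0 finite_P1 finite_subset by blast
    fix p assume "p \<in># mset_set P"
    then have "p \<in> P0 \<union> P1" using assms(2) \<open>finite P\<close> by auto
    then show "K0_eq C {#lp p#} {#(lab \<circ> boundary_edge) p#}"
      using boundary_edge(3) isomorphic_imp_K0_eq[OF assms(1)] by simp
  qed
  ultimately show ?thesis by simp
qed

lemma K0_eq_boundary_labels:
  assumes "is_zero_object C Z"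
  shows "K0_eq C (image_mset lp (mset_set P0)) (image_mset lp (mset_set P1))"
proof -
  have "cut_labels P0 = image_mset lab (mset_set {e\<in>E. src e \<in> P0})"
    unfolding cut_labels_def using tgt_notin_P0 by metis
  then have bottom: "K0_eq C (image_mset lp (mset_set P0)) (cut_labels P0)"
    using K0_eq_boundary_edge_labels[OF assms _ bij_betw_boundary_edge_P0] by simp
  have "cut_labels (P0 \<union> V) = image_mset lab (mset_set {e\<in>E. tgt e \<in> P1})"
    unfolding cut_labels_def using edge_ends src_notin_P1 disjoint
    by (metis (lifting) Un_iff disjoint_iff)
  then have top: "K0_eq C (image_mset lp (mset_set P1)) (cut_labels (P0 \<union> V))"
    using K0_eq_boundary_edge_labels[OF assms _ bij_betw_boundary_edge_P1] by simp
  have "K0_eq C (cut_labels P0) (cut_labels (P0 \<union> V))"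
    using edge_ends src_notin_P1 by (intro K0_eq_cut_labels_sweep) blast+
  then show ?thesis by (rule K0_eq.K0_trans[OF K0_eq.K0_trans[OF bottom] K0_eq.K0_sym[OF top]])
qed

end

lemma (in category) braid_cob_imp_K0_eq:
  assumes "is_zero_object C Z" and "braid_cob C M0 M1"
  shows "K0_eq C M0 M1"
  using assms(2) braid_cobordism.K0_eq_boundary_labels[OF _ assms(1)]
  unfolding braid_cob_iff by blast

lemma image_mset_mset_set_interval:
  assumes "\<And>i. i < length xs \<Longrightarrow> f (a + i) = xs ! i"
  shows "image_mset f (mset_set {a..<a + length xs}) = mset xs"
proof -
  have "map f [a..<a + length xs] = xs" using assms by (intro nth_equalityI) simp_all
  then show ?thesis by (metis mset_map mset_upt)
qed

text \<open>The elementary cobordism: strand \<open>i < n\<close> is the edge \<open>i\<close> from the bottom point \<open>i\<close> to the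
  top point \<open>n + 1 + i\<close>; the edge \<open>n\<close> runs from the bottom point \<open>n\<close> up to the out-vertex \<open>2n + 3\<close>,
  which emits the edges \<open>n + 1\<close> and \<open>n + 2\<close> ending at the top points \<open>2n + 1\<close> and \<open>2n + 2\<close>.\<close>

lemma (in category) ses_imp_braid_cob:
  assumes ses: "ses C X1 X2 X3"
  shows "braid_cob C (add_mset X2 M) (add_mset X1 (add_mset X3 M))"
proof -
  obtain xs where xs: "mset xs = M" using ex_mset by blast
  define n where "n = length xs"
  define lab where
    "lab e = (if e < n then xs ! e else if e = n then X2 else if e = n + 1 then X1 else X3)" for e
  define src where "src e = (if e \<le> n then e else 2 * n + 3)" for e :: nat
  define tgt where "tgt e = (if e = n then 2 * n + 3 else if e < n then e + n + 1 else e + n)" for e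
  define edge_of where
    "edge_of p = (if p \<le> n then p else if p \<le> 2 * n then p - n - 1 else p - n)" for p :: nat
  define ht :: "nat \<Rightarrow> real" where
    "ht p = (if p \<le> n then 0 else if p \<le> 2 * n + 2 then 1 else 1 / 2)" for p
  have incident: "{e\<in>{..n + 2}. src e = p \<or> tgt e = p} = {edge_of p}" if "p \<le> 2 * n + 2" for p
    using that unfolding src_def tgt_def edge_of_def by auto
  have "braid_cobordism C {..n} {n + 1..2 * n + 2} {2 * n + 3} {..n + 2} (lab \<circ> edge_of) src tgt lab ht"
  proof (unfold_locales)
    fix p assume "p \<in> {..n} \<union> {n + 1..2 * n + 2}"
    then show "\<exists>e\<in>{..n + 2}. {e'\<in>{..n + 2}. src e' = p \<or> tgt e' = p} = {e} \<and>
        isomorphic C ((lab \<circ> edge_of) p) (lab e)"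
      using incident[of p] isomorphic_refl by (auto simp: edge_of_def)
  next
    fix v assume "v \<in> {2 * n + 3}"
    then have "{e\<in>{..n + 2}. src e = v} = {n + 1, n + 2}" "{e\<in>{..n + 2}. tgt e = v} = {n}"
      unfolding src_def tgt_def by auto
    moreover have "ses C (lab (n + 1)) (lab n) (lab (n + 2))" using ses by (simp add: lab_def)
    ultimately show "\<exists>e1 e2 e3. e1 \<in> {..n + 2} \<and> e2 \<in> {..n + 2} \<and> e3 \<in> {..n + 2} \<and> e1 \<noteq> e2 \<and>
      ((({e\<in>{..n + 2}. tgt e = v} = {e1, e2} \<and> {e\<in>{..n + 2}. src e = v} = {e3}) \<or>
        ({e\<in>{..n + 2}. src e = v} = {e1, e2} \<and> {e\<in>{..n + 2}. tgt e = v} = {e3})) \<and>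
       ses C (lab e1) (lab e3) (lab e2))"
      by (intro exI[of _ "n + 1"] exI[of _ "n + 2"] exI[of _ n]) auto
  qed (auto simp: src_def tgt_def ht_def)
  moreover have "image_mset (lab \<circ> edge_of) (mset_set {..n}) = add_mset X2 M"
  proof -
    have "{..n} = insert n {0..<0 + length xs}" by (auto simp: n_def)
    moreover have "image_mset (lab \<circ> edge_of) (mset_set {0..<0 + length xs}) = M"
      unfolding xs[symmetric]
      by (rule image_mset_mset_set_interval) (simp add: edge_of_def lab_def n_def)
    ultimately show ?thesis by (simp add: edge_of_def lab_def n_def)
  qed
  moreover have
    "image_mset (lab \<circ> edge_of) (mset_set {n + 1..2 * n + 2}) = add_mset X1 (add_mset X3 M)"
  proof -
    have "{n + 1..2 * n + 2} = insert (2 * n + 1) (insert (2 * n + 2) {n + 1..<(n + 1) + length xs})"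
      by (auto simp: n_def)
    moreover have "image_mset (lab \<circ> edge_of) (mset_set {n + 1..<(n + 1) + length xs}) = M"
      unfolding xs[symmetric]
      by (rule image_mset_mset_set_interval) (simp add: edge_of_def lab_def n_def)
    ultimately show ?thesis by (simp add: edge_of_def lab_def n_def)
  qed
  ultimately show ?thesis unfolding braid_cob_iff by blast
qed

lemma cob_equiv_sym: "cob_equiv C M N \<Longrightarrow> cob_equiv C N M"
  unfolding cob_equiv_def by (rule sympD[OF symp_rtranclp]) (auto intro: sympI)

lemma cob_equiv_trans: "cob_equiv C M N \<Longrightarrow> cob_equiv C N P \<Longrightarrow> cob_equiv C M P"
  unfolding cob_equiv_def by (rule rtranclp_trans)

lemma braid_cob_imp_cob_equiv: "braid_cob C M N \<Longrightarrow> cob_equiv C M N"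
  unfolding cob_equiv_def by (rule r_into_rtranclp) (rule disjI1)

lemma (in category) K0_eq_imp_cob_equiv: "K0_eq C M N \<Longrightarrow> cob_equiv C M N"
proof (induction rule: K0_eq.induct)
  case (K0_gen X1 X2 X3 M)
  then show ?case by (intro braid_cob_imp_cob_equiv ses_imp_braid_cob)
next
  case (K0_refl M)
  then show ?case by (simp add: cob_equiv_def)
qed (auto intro: cob_equiv_sym cob_equiv_trans)

lemma (in category) cob_equiv_imp_K0_eq:
  assumes "is_zero_object C Z" and "cob_equiv C M N"
  shows "K0_eq C M N"
  using assms(2) unfolding cob_equiv_def
proof (induction rule: rtranclp_induct)
  case base
  show ?case by (rule K0_eq.K0_refl)
next
  case (step N P)
  then have "K0_eq C N P"
    using braid_cob_imp_K0_eq[OF assms(1)] K0_eq.K0_sym[OF braid_cob_imp_K0_eq[OF assms(1)]]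
    by blast
  then show ?case by (rule K0_eq.K0_trans[OF step.IH])
qed

theorem mainTheorem6:
  fixes C :: "('o, 'm) cat"
  assumes "abelian_category C"
  shows "\<forall>M N :: 'o multiset. cob_equiv C M N \<longleftrightarrow> K0_eq C M N"
proof -
  interpret category C
    using assms by unfold_locales (simp add: abelian_category_def)
  obtain Z where "is_zero_object C Z"
    using assms unfolding abelian_category_def by blast
  then show ?thesis using cob_equiv_imp_K0_eq K0_eq_imp_cob_equiv by blast
qed

end
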